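(* Let $G$ be a finite group and let $C\subset G$ be an abundant conjugacy class. Then for every positive integer $n$ divisible by $|G|^2$, there exists $s\in G\backslash\operatorname{Sur}^C_1(F_n,G)$ such that the image in $S_n$ of the stabilizer of $s$ in $B_n$ contains an $n$-cycle.
   Context: A conjugacy class $C$ of $G$ is abundant if for some (equivalently every) $x\in C$ there is $y\in G$ such that $\{y^{-r}xy^r:r\in\mathbb Z\}$ generates $G$. $\operatorname{Sur}^C_1(F_n,G)$ is the set of $(g_1,\dots,g_n)\in C^n$ with $\langle g_1,\dots,g_n\rangle=G$ and $g_1\cdots g_n=1$; $G\backslash\operatorname{Sur}^C_1(F_n,G)$ is its set of orbits under simultaneous conjugation $(g_i)\mapsto(gg_ig^{-1})$. $B_n$ acts on it from the right via $(\dots,g_i,g_{i+1},\dots)^{\sigma_i}=(\dots,g_{i+1},g_{i+1}^{-1}g_ig_{i+1},\dots)$ (this commutes with conjugation), and $B_n\to S_n$ sends $\sigma_i\mapsto(i\ i+1)$. *)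

theory Defs
  imports "HOL-Algebra.Algebra" "HOL-Combinatorics.Cycles"
begin

definition conj_class :: "('a, 'b) monoid_scheme \<Rightarrow> 'a \<Rightarrow> 'a set" where
  "conj_class G x = {g \<otimes>\<^bsub>G\<^esub> x \<otimes>\<^bsub>G\<^esub> inv\<^bsub>G\<^esub> g | g. g \<in> carrier G}"

definition is_conj_class :: "('a, 'b) monoid_scheme \<Rightarrow> 'a set \<Rightarrow> bool" where
  "is_conj_class G C \<longleftrightarrow> (\<exists>x \<in> carrier G. C = conj_class G x)"

text \<open>Abundant conjugacy class (the "for some x in C" version).\<close>
definition abundant :: "('a, 'b) monoid_scheme \<Rightarrow> 'a set \<Rightarrow> bool" where
  "abundant G C \<longleftrightarrow> (\<exists>x \<in> C. \<exists>y \<in> carrier G.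
     generate G {inv\<^bsub>G\<^esub> (y [^]\<^bsub>G\<^esub> r) \<otimes>\<^bsub>G\<^esub> x \<otimes>\<^bsub>G\<^esub> (y [^]\<^bsub>G\<^esub> r) | r::int. True} = carrier G)"

definition tuple_prod :: "('a, 'b) monoid_scheme \<Rightarrow> 'a list \<Rightarrow> 'a" where
  "tuple_prod G gs = foldr (\<lambda>x acc. x \<otimes>\<^bsub>G\<^esub> acc) gs \<one>\<^bsub>G\<^esub>"

text \<open>Sur^C_1(F_n, G): tuples in C^n generating G with product 1.\<close>
definition Sur1 :: "('a, 'b) monoid_scheme \<Rightarrow> 'a set \<Rightarrow> nat \<Rightarrow> 'a list set" where
  "Sur1 G C n = {gs. length gs = n \<and> set gs \<subseteq> C \<and> generate G (set gs) = carrier G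
                     \<and> tuple_prod G gs = \<one>\<^bsub>G\<^esub>}"

definition conj_tuple :: "('a, 'b) monoid_scheme \<Rightarrow> 'a \<Rightarrow> 'a list \<Rightarrow> 'a list" where
  "conj_tuple G g gs = map (\<lambda>x. g \<otimes>\<^bsub>G\<^esub> x \<otimes>\<^bsub>G\<^esub> inv\<^bsub>G\<^esub> g) gs"

definition Sur1_orbits :: "('a, 'b) monoid_scheme \<Rightarrow> 'a set \<Rightarrow> nat \<Rightarrow> 'a list set set" where
  "Sur1_orbits G C n = {{conj_tuple G g gs | g. g \<in> carrier G} | gs. gs \<in> Sur1 G C n}"

text \<open>Braids in B_n are represented by words in the standard generators:
  a letter (i, True) is sigma_(i+1), (i, False) is its inverse; positions are 0-based,
  so a valid letter has i + 1 < n.\<close>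
definition braid_word :: "nat \<Rightarrow> (nat \<times> bool) list \<Rightarrow> bool" where
  "braid_word n w \<longleftrightarrow> (\<forall>(i, _) \<in> set w. Suc i < n)"

definition gen_act :: "('a, 'b) monoid_scheme \<Rightarrow> nat \<times> bool \<Rightarrow> 'a list \<Rightarrow> 'a list" where
  "gen_act G l gs = (case l of (i, e) \<Rightarrow>
     (let a = gs ! i; b = gs ! Suc i in
      if e then gs[i := b, Suc i := inv\<^bsub>G\<^esub> b \<otimes>\<^bsub>G\<^esub> a \<otimes>\<^bsub>G\<^esub> b]
      else gs[i := a \<otimes>\<^bsub>G\<^esub> b \<otimes>\<^bsub>G\<^esub> inv\<^bsub>G\<^esub> a, Suc i := a]))"

definition braid_act :: "('a, 'b) monoid_scheme \<Rightarrow> (nat \<times> bool) list \<Rightarrow> 'a list \<Rightarrow> 'a list" where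
  "braid_act G w gs = fold (gen_act G) w gs"

definition braid_perm :: "(nat \<times> bool) list \<Rightarrow> nat \<Rightarrow> nat" where
  "braid_perm w = foldr (\<lambda>l p. transpose (fst l) (Suc (fst l)) \<circ> p) w id"

definition stab_image :: "('a, 'b) monoid_scheme \<Rightarrow> nat \<Rightarrow> 'a list set \<Rightarrow> (nat \<Rightarrow> nat) set" where
  "stab_image G n s = {braid_perm w | w. braid_word n w \<and> braid_act G w ` s = s}"

definition is_n_cycle :: "nat \<Rightarrow> (nat \<Rightarrow> nat) \<Rightarrow> bool" where
  "is_n_cycle n p \<longleftrightarrow> (\<exists>cs. distinct cs \<and> set cs = {0..<n} \<and> p = cycle_of_list cs)"

end

theory Submission
  imports Defs
begin

text \<open>Pick x in C and y such that the conjugates y^-r x y^r generate G. The tuple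
  (x, y^-1 x y, y^-2 x y^2, ..., y^-(n-1) x y^(n-1)) lies in C^n, generates G, and has product
  (x y^-1)^n y^n = 1 once |G| divides n. The braid sigma_1 sigma_2 ... sigma_(n-1) sends every
  tuple of product 1 to its cyclic rotation, and rotating this particular tuple amounts to
  conjugating it by y^-1. So the braid fixes the conjugation orbit of the tuple, while its image
  in S_n is the n-cycle (1 2 ... n).\<close>

lemma tuple_prod_Nil [simp]: "tuple_prod G [] = \<one>\<^bsub>G\<^esub>"
  by (simp add: tuple_prod_def)

lemma tuple_prod_Cons [simp]: "tuple_prod G (a # xs) = a \<otimes>\<^bsub>G\<^esub> tuple_prod G xs"
  by (simp add: tuple_prod_def)

definition rotation_word :: "nat \<Rightarrow> (nat \<times> bool) list" where
  "rotation_word n = map (\<lambda>j. (j, True)) [0..<n - 1]"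

definition power_conjugates :: "('a, 'b) monoid_scheme \<Rightarrow> 'a \<Rightarrow> 'a \<Rightarrow> nat \<Rightarrow> 'a list" where
  "power_conjugates G x y n =
     map (\<lambda>i::nat. inv\<^bsub>G\<^esub> (y [^]\<^bsub>G\<^esub> i) \<otimes>\<^bsub>G\<^esub> x \<otimes>\<^bsub>G\<^esub> y [^]\<^bsub>G\<^esub> i) [0..<n]"

lemma braid_perm_upt:
  "braid_perm (map (\<lambda>j. (j, True)) [m..<m + k]) = cycle_of_list [m..<m + k + 1]"
proof (induction k arbitrary: m)
  case 0
  show ?case by (simp add: braid_perm_def)
next
  case (Suc k)
  have word: "[m..<m + Suc k] = m # [Suc m..<Suc m + k]"
    and cycle: "[m..<m + Suc k + 1] = m # Suc m # [Suc (Suc m)..<Suc m + k + 1]"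
    and cycle': "[Suc m..<Suc m + k + 1] = Suc m # [Suc (Suc m)..<Suc m + k + 1]"
    by (simp_all add: upt_conv_Cons)
  have "braid_perm (map (\<lambda>j. (j, True)) [m..<m + Suc k])
      = transpose m (Suc m) \<circ> braid_perm (map (\<lambda>j. (j, True)) [Suc m..<Suc m + k])"
    unfolding word by (simp add: braid_perm_def)
  also have "\<dots> = transpose m (Suc m) \<circ> cycle_of_list [Suc m..<Suc m + k + 1]"
    by (simp only: Suc.IH)
  also have "\<dots> = cycle_of_list [m..<m + Suc k + 1]"
    unfolding cycle cycle' by simp
  finally show ?case .
qed

lemma is_n_cycle_braid_perm_rotation_word:
  assumes "n > 0"
  shows "is_n_cycle n (braid_perm (rotation_word n))"
proof -
  have "braid_perm (rotation_word n) = cycle_of_list [0..<n]"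
    using braid_perm_upt[of 0 "n - 1"] assms by (simp add: rotation_word_def)
  then show ?thesis
    unfolding is_n_cycle_def by (intro exI[of _ "[0..<n]"]) auto
qed

lemma braid_word_rotation_word: "braid_word n (rotation_word n)"
  by (auto simp: braid_word_def rotation_word_def)

context group
begin

lemma tuple_prod_closed [simp]: "set xs \<subseteq> carrier G \<Longrightarrow> tuple_prod G xs \<in> carrier G"
  by (induction xs) auto

lemma tuple_prod_snoc:
  "set xs \<subseteq> carrier G \<Longrightarrow> a \<in> carrier G \<Longrightarrow> tuple_prod G (xs @ [a]) = tuple_prod G xs \<otimes> a"
  by (induction xs) (auto simp: m_assoc)

lemma tuple_prod_conj_tuple:
  "g \<in> carrier G \<Longrightarrow> set xs \<subseteq> carrier G \<Longrightarrow>
    tuple_prod G (conj_tuple G g xs) = g \<otimes> tuple_prod G xs \<otimes> inv g"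
  by (induction xs) (auto simp: conj_tuple_def m_assoc inv_solve_left')

lemma conj_tuple_conj_tuple:
  "g \<in> carrier G \<Longrightarrow> h \<in> carrier G \<Longrightarrow> set xs \<subseteq> carrier G \<Longrightarrow>
    conj_tuple G g (conj_tuple G h xs) = conj_tuple G (g \<otimes> h) xs"
  unfolding conj_tuple_def by (auto simp: m_assoc inv_mult_group subset_iff)

lemma fold_gen_act_carries_entry_right:
  assumes "a \<in> carrier G" "set xs \<subseteq> carrier G"
  shows "fold (gen_act G) (map (\<lambda>j. (j, True)) [length p..<length p + length xs]) (p @ a # xs)
     = p @ xs @ [inv (tuple_prod G xs) \<otimes> a \<otimes> tuple_prod G xs]"
  using assms
proof (induction xs arbitrary: p a)
  case Nil
  then show ?case by simp
next
  case (Cons b ys)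
  have "gen_act G (length p, True) (p @ a # b # ys) = (p @ [b]) @ (inv b \<otimes> a \<otimes> b) # ys"
    by (simp add: gen_act_def nth_append list_update_append)
  then have "fold (gen_act G) (map (\<lambda>j. (j, True)) [length p..<length p + length (b # ys)]) (p @ a # b # ys)
     = fold (gen_act G) (map (\<lambda>j. (j, True)) [length (p @ [b])..<length (p @ [b]) + length ys])
         ((p @ [b]) @ (inv b \<otimes> a \<otimes> b) # ys)"
    by (simp add: upt_rec)
  also have "\<dots> = (p @ [b]) @ ys @ [inv (tuple_prod G ys) \<otimes> (inv b \<otimes> a \<otimes> b) \<otimes> tuple_prod G ys]"
    using Cons by (intro Cons.IH) auto
  also have "inv (tuple_prod G ys) \<otimes> (inv b \<otimes> a \<otimes> b) \<otimes> tuple_prod G ys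
      = inv (tuple_prod G (b # ys)) \<otimes> a \<otimes> tuple_prod G (b # ys)"
    using Cons.prems by (simp add: m_assoc inv_mult_group)
  finally show ?case by simp
qed

text \<open>The first entry a is carried to the end and conjugated by the product of the others,
  which is a^-1 when the whole product is 1.\<close>
lemma braid_act_rotation_word:
  assumes "set gs \<subseteq> carrier G" "tuple_prod G gs = \<one>"
  shows "braid_act G (rotation_word (length gs)) gs = rotate1 gs"
proof (cases gs)
  case Nil
  then show ?thesis by (simp add: braid_act_def rotation_word_def)
next
  case (Cons a xs)
  with assms have carrier: "a \<in> carrier G" "set xs \<subseteq> carrier G" by auto
  with assms(2) Cons have "tuple_prod G xs = inv a"
    by (metis inv_comm inv_equality tuple_prod_Cons tuple_prod_closed)
  then have "inv (tuple_prod G xs) \<otimes> a \<otimes> tuple_prod G xs = a"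
    using carrier by (simp add: m_assoc)
  then show ?thesis
    using fold_gen_act_carries_entry_right[OF carrier, of "[]"] Cons
    by (simp add: braid_act_def rotation_word_def)
qed

lemma rotation_word_stabilizes_conj_orbit:
  assumes gs: "set gs \<subseteq> carrier G" "tuple_prod G gs = \<one>"
    and h: "h \<in> carrier G" and rotate: "rotate1 gs = conj_tuple G h gs"
  shows "braid_act G (rotation_word (length gs)) ` {conj_tuple G g gs | g. g \<in> carrier G}
       = {conj_tuple G g gs | g. g \<in> carrier G}"
proof -
  have act: "braid_act G (rotation_word (length gs)) (conj_tuple G g gs) = conj_tuple G (g \<otimes> h) gs"
    if g: "g \<in> carrier G" for g
  proof -
    have "set (conj_tuple G g gs) \<subseteq> carrier G"
      using g gs by (auto simp: conj_tuple_def)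
    moreover have "tuple_prod G (conj_tuple G g gs) = \<one>"
      using g gs by (simp add: tuple_prod_conj_tuple)
    moreover have "length (conj_tuple G g gs) = length gs"
      by (simp add: conj_tuple_def)
    ultimately have "braid_act G (rotation_word (length gs)) (conj_tuple G g gs) = rotate1 (conj_tuple G g gs)"
      using braid_act_rotation_word by metis
    also have "\<dots> = conj_tuple G g (conj_tuple G h gs)"
      using rotate by (simp add: conj_tuple_def rotate1_map)
    finally show ?thesis
      using g h gs by (simp add: conj_tuple_conj_tuple)
  qed
  have "conj_tuple G g gs = braid_act G (rotation_word (length gs)) (conj_tuple G (g \<otimes> inv h) gs)"
    if "g \<in> carrier G" for g
    using act[of "g \<otimes> inv h"] that h by (simp add: m_assoc)
  then have "{conj_tuple G g gs | g. g \<in> carrier G}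
      \<subseteq> braid_act G (rotation_word (length gs)) ` {conj_tuple G g gs | g. g \<in> carrier G}"
    using h by blast
  moreover have "braid_act G (rotation_word (length gs)) ` {conj_tuple G g gs | g. g \<in> carrier G}
      \<subseteq> {conj_tuple G g gs | g. g \<in> carrier G}"
    using act h by auto
  ultimately show ?thesis
    by (rule antisym[rotated])
qed

lemma conj_mem_conj_class:
  assumes "is_conj_class G C" "x \<in> C" "g \<in> carrier G"
  shows "g \<otimes> x \<otimes> inv g \<in> C"
proof -
  obtain x0 h where "x0 \<in> carrier G" "C = conj_class G x0" "h \<in> carrier G" "x = h \<otimes> x0 \<otimes> inv h"
    using assms(1,2) by (auto simp: is_conj_class_def conj_class_def)
  moreover from calculation have "g \<otimes> x \<otimes> inv g = (g \<otimes> h) \<otimes> x0 \<otimes> inv (g \<otimes> h)"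
    using assms(3) by (simp add: m_assoc inv_mult_group)
  ultimately show ?thesis
    using assms(3) by (auto simp: conj_class_def)
qed

lemma power_conjugates_in_conj_class:
  assumes "is_conj_class G C" "x \<in> C" "y \<in> carrier G"
  shows "set (power_conjugates G x y n) \<subseteq> C"
  using conj_mem_conj_class[OF assms(1,2), of "inv (y [^] i)" for i :: nat] assms(3)
  by (auto simp: power_conjugates_def)

lemma int_pow_eq_nat_pow_mod:
  assumes "x \<in> carrier G" "n > 0" "x [^] n = \<one>"
  shows "x [^] (r::int) = x [^] nat (r mod int n)"
proof -
  have "int (ord x) dvd int n"
    using assms by (simp add: pow_eq_id)
  moreover have "int n dvd r mod int n - r"
    by (metis dvd_minus_mod dvd_minus_iff minus_diff_eq)
  ultimately have "int (ord x) dvd r mod int n - r"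
    by (rule dvd_trans)
  then have "x [^] r = x [^] (r mod int n)"
    using assms(1) by (simp add: int_pow_eq)
  also have "\<dots> = x [^] nat (r mod int n)"
    using assms(2) by (simp flip: int_pow_int)
  finally show ?thesis .
qed

lemma power_conjugates_closed:
  "x \<in> carrier G \<Longrightarrow> y \<in> carrier G \<Longrightarrow> set (power_conjugates G x y n) \<subseteq> carrier G"
  by (auto simp: power_conjugates_def)

lemma tuple_prod_power_conjugates:
  assumes "x \<in> carrier G" "y \<in> carrier G"
  shows "tuple_prod G (power_conjugates G x y k) = (x \<otimes> inv y) [^] k \<otimes> y [^] k"
proof (induction k)
  case 0
  show ?case by (simp add: power_conjugates_def)
next
  case (Suc k)
  have "tuple_prod G (power_conjugates G x y (Suc k))
      = tuple_prod G (power_conjugates G x y k) \<otimes> (inv (y [^] k) \<otimes> x \<otimes> y [^] k)"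
    using assms power_conjugates_closed[OF assms, of k]
    by (simp add: power_conjugates_def tuple_prod_snoc)
  also have "\<dots> = (x \<otimes> inv y) [^] k \<otimes> x \<otimes> y [^] k"
    using assms by (simp add: Suc.IH m_assoc) (simp flip: m_assoc)
  also have "\<dots> = (x \<otimes> inv y) [^] k \<otimes> (x \<otimes> inv y) \<otimes> (y \<otimes> y [^] k)"
    using assms by (simp add: m_assoc) (simp flip: m_assoc)
  also have "\<dots> = (x \<otimes> inv y) [^] Suc k \<otimes> y [^] Suc k"
    using assms nat_pow_Suc2[of y k] by simp
  finally show ?case .
qed

lemma rotate1_power_conjugates:
  assumes "x \<in> carrier G" "y \<in> carrier G" "n > 0" "y [^] n = \<one>"
  shows "rotate1 (power_conjugates G x y n) = conj_tuple G (inv y) (power_conjugates G x y n)"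
proof -
  define e where "e = (\<lambda>i::nat. inv (y [^] i) \<otimes> x \<otimes> y [^] i)"
  have "inv y \<otimes> e i \<otimes> inv (inv y) = e (Suc i)" for i
    using assms by (simp add: e_def m_assoc inv_mult_group nat_pow_Suc)
  then have "conj_tuple G (inv y) (power_conjugates G x y n) = map (e \<circ> Suc) [0..<n]"
    by (simp add: conj_tuple_def power_conjugates_def flip: e_def)
  also have "\<dots> = map e [1..<n] @ [e n]"
    using assms(3) by (simp add: map_Suc_upt flip: map_map)
  also have "e n = e 0"
    using assms by (simp add: e_def)
  finally show ?thesis
    using assms(3) by (simp add: power_conjugates_def upt_conv_Cons flip: e_def)
qed

lemma set_power_conjugates:
  assumes "x \<in> carrier G" "y \<in> carrier G" "n > 0" "y [^] n = \<one>"
  shows "set (power_conjugates G x y n) = {inv (y [^] r) \<otimes> x \<otimes> y [^] r | r::int. True}"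
proof -
  have "inv (y [^] r) \<otimes> x \<otimes> y [^] r \<in> set (power_conjugates G x y n)" for r :: int
    using assms int_pow_eq_nat_pow_mod[of y n r]
    by (auto simp: power_conjugates_def nat_less_iff intro!: image_eqI[of _ _ "nat (r mod int n)"])
  moreover have "inv (y [^] i) \<otimes> x \<otimes> y [^] i = inv (y [^] int i) \<otimes> x \<otimes> y [^] int i" for i :: nat
    by (simp add: int_pow_int)
  ultimately show ?thesis
    by (auto simp: power_conjugates_def)
qed

end

theorem proposition4p45:
  fixes G (structure) and C :: "'a set" and n :: nat
  assumes "group G" and "finite (carrier G)"
    and "is_conj_class G C" and "abundant G C"
    and "n > 0" and "(order G)^2 dvd n"
  shows "\<exists>s \<in> Sur1_orbits G C n. \<exists>p \<in> stab_image G n s. is_n_cycle n p"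
proof -
  interpret group G by fact
  obtain x y where xC: "x \<in> C" and y: "y \<in> carrier G"
    and gen: "generate G {inv (y [^] r) \<otimes> x \<otimes> (y [^] r) | r::int. True} = carrier G"
    using assms(4) by (auto simp: abundant_def)
  have x: "x \<in> carrier G"
    using assms(3) xC by (auto simp: is_conj_class_def conj_class_def)
  obtain k where n: "n = order G * k"
    using assms(6) by (metis dvd_mult_left dvdE power2_eq_square)
  have pow_n: "z [^] n = \<one>" if "z \<in> carrier G" for z
    using pow_order_eq_1[OF that] that by (simp add: n flip: nat_pow_pow)
  note y_pow_n = pow_n[OF y]
  define gs where "gs = power_conjugates G x y n"
  have gs_carrier: "set gs \<subseteq> carrier G"
    using x y by (simp add: gs_def power_conjugates_closed)
  have gs_prod: "tuple_prod G gs = \<one>"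
    using x y pow_n by (simp add: gs_def tuple_prod_power_conjugates)
  have gs_length: "length gs = n"
    by (simp add: gs_def power_conjugates_def)
  have "set gs \<subseteq> C"
    unfolding gs_def by (rule power_conjugates_in_conj_class[OF assms(3) xC y])
  moreover have "generate G (set gs) = carrier G"
    unfolding gs_def set_power_conjugates[OF x y assms(5) y_pow_n] by (rule gen)
  ultimately have "gs \<in> Sur1 G C n"
    using gs_prod gs_length by (simp add: Sur1_def)
  then have orbit: "{conj_tuple G g gs | g. g \<in> carrier G} \<in> Sur1_orbits G C n"
    by (auto simp: Sur1_orbits_def)
  have "rotate1 gs = conj_tuple G (inv y) gs"
    unfolding gs_def by (rule rotate1_power_conjugates[OF x y assms(5) y_pow_n])
  from rotation_word_stabilizes_conj_orbit[OF gs_carrier gs_prod inv_closed[OF y] this]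
  have "braid_perm (rotation_word n) \<in> stab_image G n {conj_tuple G g gs | g. g \<in> carrier G}"
    using braid_word_rotation_word by (auto simp: stab_image_def gs_length)
  with orbit show ?thesis
    using is_n_cycle_braid_perm_rotation_word[OF assms(5)] by blast
qed

end
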